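(* Let $\mathcal L$ be either first-order logic (FO) or monadic second-order logic (MSO), let $k\ge 0$, let $\sigma,\sigma'$ be disjoint vocabularies, let $\mathfrak C$ be a class of finite $\sigma'$-structures and $\mathcal D$ a class of finite $\sigma$-structures. Let $\mathcal A,\mathcal A'\in\mathcal D$ and $\mathcal B,\mathcal B'\in\mathfrak C$ with $\mathrm{dom}(\mathcal A)=\mathrm{dom}(\mathcal B)$ and $\mathrm{dom}(\mathcal A')=\mathrm{dom}(\mathcal B')$. If $(\mathcal A',\mathcal B')$ is a $k$-flip of $(\mathcal A,\mathcal B)$ under $(\mathcal L,\mathcal D,\mathfrak C)$, then $\mathrm{tp}^k_{\mathrm{inv}(\mathcal L+\{\mathfrak C\})^{\mathcal D}}(\mathcal A)=\mathrm{tp}^k_{\mathrm{inv}(\mathcal L+\{\mathfrak C\})^{\mathcal D}}(\mathcal A')$.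
   Context: All structures are finite; vocabularies consist of relation and constant symbols. For a $\sigma$-structure $\mathcal A$ and a $\sigma'$-structure $\mathcal B$ with the same domain, $(\mathcal A,\mathcal B)$ denotes the $(\sigma\cup\sigma')$-structure on that domain interpreting $\sigma$ as in $\mathcal A$ and $\sigma'$ as in $\mathcal B$. The quantifier rank of a formula is its depth of quantifier nesting, and $\mathrm{tp}^k_{\mathcal L}(\mathcal M)$ is the set of $\mathcal L$-sentences of quantifier rank at most $k$ true in $\mathcal M$. An $\mathcal L$-sentence $\varphi$ over $\sigma\cup\sigma'$ is $\mathfrak C$-invariant over $\mathcal D$ if for every $\mathcal A\in\mathcal D$ and all $\mathcal B_1,\mathcal B_2\in\mathfrak C$ with domain $\mathrm{dom}(\mathcal A)$, $(\mathcal A,\mathcal B_1)\models\varphi$ iff $(\mathcal A,\mathcal B_2)\models\varphi$; such $\varphi$ defines the query $Q_\varphi=\{\mathcal A\in\mathcal D : (\mathcal A,\mathcal B)\models\varphi$ for some (equivalently all) $\mathcal B\in\mathfrak C$ with $\mathrm{dom}(\mathcal B)=\mathrm{dom}(\mathcal A)\}$. The rank-$k$ $\mathfrak C$-invariant $\mathcal L$ type of $\mathcal A\in\mathcal D$, written $\mathrm{tp}^k_{\mathrm{inv}(\mathcal L+\{\mathfrak C\})^{\mathcal D}}(\mathcal A)$, is the set of all $\mathcal L$-sentences $\varphi$ that are $\mathfrak C$-invariant over $\mathcal D$, have quantifier rank at most $k$, and satisfy $\mathcal A\in Q_\varphi$. For pairs $(\mathcal A,\mathcal B),(\mathcal A',\mathcal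 B')$ with $\mathcal A,\mathcal A'\in\mathcal D$, $\mathcal B,\mathcal B'\in\mathfrak C$ and shared domains, write $(\mathcal A,\mathcal B)\sim_k(\mathcal A',\mathcal B')$ if either $\mathcal A=\mathcal A'$ or $\mathrm{tp}^k_{\mathcal L}(\mathcal A,\mathcal B)=\mathrm{tp}^k_{\mathcal L}(\mathcal A',\mathcal B')$. $(\mathcal A',\mathcal B')$ is a $k$-flip of $(\mathcal A,\mathcal B)$ under $(\mathcal L,\mathcal D,\mathfrak C)$ if it is reachable from $(\mathcal A,\mathcal B)$ by a finite sequence of $\sim_k$ steps. *)

theory Defs
  imports Main
begin

record ('r, 'c) vocab =
  vrels :: "'r set"
  varity :: "'r \<Rightarrow> nat"
  vconsts :: "'c set"

record ('a, 'r, 'c) struct =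
  sdom :: "'a set"
  srel :: "'r \<Rightarrow> 'a list set"
  scst :: "'c \<Rightarrow> 'a"

definition is_structure :: "('r, 'c) vocab \<Rightarrow> ('a, 'r, 'c) struct \<Rightarrow> bool" where
  "is_structure \<tau> M \<longleftrightarrow> finite (sdom M) \<and> sdom M \<noteq> {} \<and>
     (\<forall>R \<in> vrels \<tau>. srel M R \<subseteq> {xs. length xs = varity \<tau> R \<and> set xs \<subseteq> sdom M}) \<and>
     (\<forall>c \<in> vconsts \<tau>. scst M c \<in> sdom M)"

definition disjoint_vocabs :: "('r, 'c) vocab \<Rightarrow> ('r, 'c) vocab \<Rightarrow> bool" where
  "disjoint_vocabs \<sigma> \<sigma>' \<longleftrightarrow> vrels \<sigma> \<inter> vrels \<sigma>' = {} \<and> vconsts \<sigma> \<inter> vconsts \<sigma>' = {}"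

definition vunion :: "('r, 'c) vocab \<Rightarrow> ('r, 'c) vocab \<Rightarrow> ('r, 'c) vocab" where
  "vunion \<sigma> \<sigma>' = \<lparr> vrels = vrels \<sigma> \<union> vrels \<sigma>',
     varity = (\<lambda>R. if R \<in> vrels \<sigma> then varity \<sigma> R else varity \<sigma>' R),
     vconsts = vconsts \<sigma> \<union> vconsts \<sigma>' \<rparr>"

text \<open>The expansion (A,B): domain of A, the symbols of \<sigma> interpreted as in A, the rest as in B.\<close>
definition combine :: "('r, 'c) vocab \<Rightarrow> ('a, 'r, 'c) struct \<Rightarrow> ('a, 'r, 'c) struct \<Rightarrow> ('a, 'r, 'c) struct" where
  "combine \<sigma> A B = \<lparr> sdom = sdom A,
     srel = (\<lambda>R. if R \<in> vrels \<sigma> then srel A R else srel B R),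
     scst = (\<lambda>c. if c \<in> vconsts \<sigma> then scst A c else scst B c) \<rparr>"

datatype 'c trm = Var nat | Cst 'c

datatype ('r, 'c) fm =
    FEq "'c trm" "'c trm"
  | FRel 'r "'c trm list"
  | FMem "'c trm" nat
  | FNeg "('r, 'c) fm"
  | FConj "('r, 'c) fm" "('r, 'c) fm"
  | FEx nat "('r, 'c) fm"
  | FExSet nat "('r, 'c) fm"

fun tvars :: "'c trm \<Rightarrow> nat set" where
  "tvars (Var x) = {x}" | "tvars (Cst c) = {}"

fun tconsts :: "'c trm \<Rightarrow> 'c set" where
  "tconsts (Var x) = {}" | "tconsts (Cst c) = {c}"

fun fvars :: "('r, 'c) fm \<Rightarrow> nat set" where
  "fvars (FEq s t) = tvars s \<union> tvars t"
| "fvars (FRel R ts) = (\<Union>t \<in> set ts. tvars t)"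
| "fvars (FMem t X) = tvars t"
| "fvars (FNeg \<phi>) = fvars \<phi>"
| "fvars (FConj \<phi> \<psi>) = fvars \<phi> \<union> fvars \<psi>"
| "fvars (FEx x \<phi>) = fvars \<phi> - {x}"
| "fvars (FExSet X \<phi>) = fvars \<phi>"

fun fsvars :: "('r, 'c) fm \<Rightarrow> nat set" where
  "fsvars (FEq s t) = {}"
| "fsvars (FRel R ts) = {}"
| "fsvars (FMem t X) = {X}"
| "fsvars (FNeg \<phi>) = fsvars \<phi>"
| "fsvars (FConj \<phi> \<psi>) = fsvars \<phi> \<union> fsvars \<psi>"
| "fsvars (FEx x \<phi>) = fsvars \<phi>"
| "fsvars (FExSet X \<phi>) = fsvars \<phi> - {X}"

fun over_vocab :: "('r, 'c) vocab \<Rightarrow> ('r, 'c) fm \<Rightarrow> bool" where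
  "over_vocab \<tau> (FEq s t) \<longleftrightarrow> tconsts s \<union> tconsts t \<subseteq> vconsts \<tau>"
| "over_vocab \<tau> (FRel R ts) \<longleftrightarrow> R \<in> vrels \<tau> \<and> length ts = varity \<tau> R \<and>
      (\<forall>t \<in> set ts. tconsts t \<subseteq> vconsts \<tau>)"
| "over_vocab \<tau> (FMem t X) \<longleftrightarrow> tconsts t \<subseteq> vconsts \<tau>"
| "over_vocab \<tau> (FNeg \<phi>) \<longleftrightarrow> over_vocab \<tau> \<phi>"
| "over_vocab \<tau> (FConj \<phi> \<psi>) \<longleftrightarrow> over_vocab \<tau> \<phi> \<and> over_vocab \<tau> \<psi>"
| "over_vocab \<tau> (FEx x \<phi>) \<longleftrightarrow> over_vocab \<tau> \<phi>"
| "over_vocab \<tau> (FExSet X \<phi>) \<longleftrightarrow> over_vocab \<tau> \<phi>"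

fun is_fo :: "('r, 'c) fm \<Rightarrow> bool" where
  "is_fo (FEq s t) = True"
| "is_fo (FRel R ts) = True"
| "is_fo (FMem t X) = False"
| "is_fo (FNeg \<phi>) = is_fo \<phi>"
| "is_fo (FConj \<phi> \<psi>) = (is_fo \<phi> \<and> is_fo \<psi>)"
| "is_fo (FEx x \<phi>) = is_fo \<phi>"
| "is_fo (FExSet X \<phi>) = False"

fun qrank :: "('r, 'c) fm \<Rightarrow> nat" where
  "qrank (FEq s t) = 0"
| "qrank (FRel R ts) = 0"
| "qrank (FMem t X) = 0"
| "qrank (FNeg \<phi>) = qrank \<phi>"
| "qrank (FConj \<phi> \<psi>) = max (qrank \<phi>) (qrank \<psi>)"
| "qrank (FEx x \<phi>) = Suc (qrank \<phi>)"
| "qrank (FExSet X \<phi>) = Suc (qrank \<phi>)"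

fun teval :: "('a, 'r, 'c) struct \<Rightarrow> (nat \<Rightarrow> 'a) \<Rightarrow> 'c trm \<Rightarrow> 'a" where
  "teval M v (Var x) = v x" | "teval M v (Cst c) = scst M c"

fun sat :: "('a, 'r, 'c) struct \<Rightarrow> (nat \<Rightarrow> 'a) \<Rightarrow> (nat \<Rightarrow> 'a set) \<Rightarrow> ('r, 'c) fm \<Rightarrow> bool" where
  "sat M v V (FEq s t) \<longleftrightarrow> teval M v s = teval M v t"
| "sat M v V (FRel R ts) \<longleftrightarrow> map (teval M v) ts \<in> srel M R"
| "sat M v V (FMem t X) \<longleftrightarrow> teval M v t \<in> V X"
| "sat M v V (FNeg \<phi>) \<longleftrightarrow> \<not> sat M v V \<phi>"
| "sat M v V (FConj \<phi> \<psi>) \<longleftrightarrow> sat M v V \<phi> \<and> sat M v V \<psi>"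
| "sat M v V (FEx x \<phi>) \<longleftrightarrow> (\<exists>a \<in> sdom M. sat M (v(x := a)) V \<phi>)"
| "sat M v V (FExSet X \<phi>) \<longleftrightarrow> (\<exists>S. S \<subseteq> sdom M \<and> sat M v (V(X := S)) \<phi>)"

text \<open>Truth of a sentence (the assignments are irrelevant for sentences; we fix arbitrary ones).\<close>
definition models :: "('a, 'r, 'c) struct \<Rightarrow> ('r, 'c) fm \<Rightarrow> bool" where
  "models M \<phi> \<longleftrightarrow> sat M (\<lambda>_. undefined) (\<lambda>_. {}) \<phi>"

datatype logic = FO | MSO

definition in_logic :: "logic \<Rightarrow> ('r, 'c) fm \<Rightarrow> bool" where
  "in_logic L \<phi> \<longleftrightarrow> (L = FO \<longrightarrow> is_fo \<phi>)"

definition is_sentence :: "logic \<Rightarrow> ('r, 'c) vocab \<Rightarrow> ('r, 'c) fm \<Rightarrow> bool" where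
  "is_sentence L \<tau> \<phi> \<longleftrightarrow> in_logic L \<phi> \<and> over_vocab \<tau> \<phi> \<and> fvars \<phi> = {} \<and> fsvars \<phi> = {}"

definition tp :: "logic \<Rightarrow> ('r, 'c) vocab \<Rightarrow> nat \<Rightarrow> ('a, 'r, 'c) struct \<Rightarrow> ('r, 'c) fm set" where
  "tp L \<tau> k M = {\<phi>. is_sentence L \<tau> \<phi> \<and> qrank \<phi> \<le> k \<and> models M \<phi>}"

definition C_invariant ::
  "('r, 'c) vocab \<Rightarrow> ('a, 'r, 'c) struct set \<Rightarrow> ('a, 'r, 'c) struct set \<Rightarrow> ('r, 'c) fm \<Rightarrow> bool" where
  "C_invariant \<sigma> D C \<phi> \<longleftrightarrow>
     (\<forall>A \<in> D. \<forall>B1 \<in> C. \<forall>B2 \<in> C. sdom B1 = sdom A \<longrightarrow> sdom B2 = sdom A \<longrightarrow>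
        (models (combine \<sigma> A B1) \<phi> \<longleftrightarrow> models (combine \<sigma> A B2) \<phi>))"

definition query ::
  "('r, 'c) vocab \<Rightarrow> ('a, 'r, 'c) struct set \<Rightarrow> ('a, 'r, 'c) struct set \<Rightarrow> ('r, 'c) fm \<Rightarrow> ('a, 'r, 'c) struct set" where
  "query \<sigma> D C \<phi> = {A \<in> D. \<exists>B \<in> C. sdom B = sdom A \<and> models (combine \<sigma> A B) \<phi>}"

definition inv_tp ::
  "logic \<Rightarrow> ('r, 'c) vocab \<Rightarrow> ('r, 'c) vocab \<Rightarrow> ('a, 'r, 'c) struct set \<Rightarrow> ('a, 'r, 'c) struct set
    \<Rightarrow> nat \<Rightarrow> ('a, 'r, 'c) struct \<Rightarrow> ('r, 'c) fm set" where
  "inv_tp L \<sigma> \<sigma>' D C k A =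
     {\<phi>. is_sentence L (vunion \<sigma> \<sigma>') \<phi> \<and> C_invariant \<sigma> D C \<phi> \<and> qrank \<phi> \<le> k \<and> A \<in> query \<sigma> D C \<phi>}"

definition valid_pair ::
  "('a, 'r, 'c) struct set \<Rightarrow> ('a, 'r, 'c) struct set \<Rightarrow> ('a, 'r, 'c) struct \<times> ('a, 'r, 'c) struct \<Rightarrow> bool" where
  "valid_pair D C p \<longleftrightarrow> fst p \<in> D \<and> snd p \<in> C \<and> sdom (fst p) = sdom (snd p)"

definition flip_step ::
  "logic \<Rightarrow> ('r, 'c) vocab \<Rightarrow> ('r, 'c) vocab \<Rightarrow> ('a, 'r, 'c) struct set \<Rightarrow> ('a, 'r, 'c) struct set \<Rightarrow> nat
    \<Rightarrow> ('a, 'r, 'c) struct \<times> ('a, 'r, 'c) struct \<Rightarrow> ('a, 'r, 'c) struct \<times> ('a, 'r, 'c) struct \<Rightarrow> bool" where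
  "flip_step L \<sigma> \<sigma>' D C k p q \<longleftrightarrow> valid_pair D C p \<and> valid_pair D C q \<and>
     (fst p = fst q \<or>
      tp L (vunion \<sigma> \<sigma>') k (combine \<sigma> (fst p) (snd p)) = tp L (vunion \<sigma> \<sigma>') k (combine \<sigma> (fst q) (snd q)))"

definition is_k_flip ::
  "logic \<Rightarrow> ('r, 'c) vocab \<Rightarrow> ('r, 'c) vocab \<Rightarrow> ('a, 'r, 'c) struct set \<Rightarrow> ('a, 'r, 'c) struct set \<Rightarrow> nat
    \<Rightarrow> ('a, 'r, 'c) struct \<times> ('a, 'r, 'c) struct \<Rightarrow> ('a, 'r, 'c) struct \<times> ('a, 'r, 'c) struct \<Rightarrow> bool" where
  "is_k_flip L \<sigma> \<sigma>' D C k p q \<longleftrightarrow> (flip_step L \<sigma> \<sigma>' D C k)\<^sup>*\<^sup>* p q"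

end

theory Submission
  imports Defs
begin

text \<open>Whether A satisfies a \<open>\<C>\<close>-invariant sentence can be read off any single expansion (A,B).
  A flip step either keeps A fixed or preserves the rank-k type of the expansion, so in both cases
  the invariant sentences of rank at most k true of the first component do not change; induction
  along the flip sequence finishes the proof.\<close>

lemma mem_query_iff_models:
  assumes "valid_pair D C (A, B)" and "C_invariant \<sigma> D C \<phi>"
  shows "A \<in> query \<sigma> D C \<phi> \<longleftrightarrow> models (combine \<sigma> A B) \<phi>"
  using assms unfolding valid_pair_def C_invariant_def query_def by auto

lemma inv_tp_eq_if_tp_eq:
  assumes "valid_pair D C (A, B)" and "valid_pair D C (A', B')"
    and "tp L (vunion \<sigma> \<sigma>') k (combine \<sigma> A B) = tp L (vunion \<sigma> \<sigma>') k (combine \<sigma> A' B')"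
  shows "inv_tp L \<sigma> \<sigma>' D C k A = inv_tp L \<sigma> \<sigma>' D C k A'"
proof (rule set_eqI)
  fix \<phi>
  show "\<phi> \<in> inv_tp L \<sigma> \<sigma>' D C k A \<longleftrightarrow> \<phi> \<in> inv_tp L \<sigma> \<sigma>' D C k A'"
  proof (cases "is_sentence L (vunion \<sigma> \<sigma>') \<phi> \<and> C_invariant \<sigma> D C \<phi> \<and> qrank \<phi> \<le> k")
    case True
    then have "models (combine \<sigma> A B) \<phi> \<longleftrightarrow> models (combine \<sigma> A' B') \<phi>"
      using assms(3) unfolding tp_def by blast
    then show ?thesis
      using True mem_query_iff_models[OF assms(1)] mem_query_iff_models[OF assms(2)]
      unfolding inv_tp_def by auto
  qed (auto simp: inv_tp_def)
qed

lemma inv_tp_eq_if_flip_step: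
  assumes "flip_step L \<sigma> \<sigma>' D C k p q"
  shows "inv_tp L \<sigma> \<sigma>' D C k (fst p) = inv_tp L \<sigma> \<sigma>' D C k (fst q)"
proof -
  obtain A B A' B' where pq: "p = (A, B)" "q = (A', B')" by fastforce
  show ?thesis
    using assms inv_tp_eq_if_tp_eq[of D C A B A' B'] unfolding pq flip_step_def by auto
qed

lemma inv_tp_eq_if_k_flip:
  assumes "is_k_flip L \<sigma> \<sigma>' D C k p q"
  shows "inv_tp L \<sigma> \<sigma>' D C k (fst p) = inv_tp L \<sigma> \<sigma>' D C k (fst q)"
  using assms[unfolded is_k_flip_def]
  by (induction rule: rtranclp_induct) (simp_all add: inv_tp_eq_if_flip_step)

theorem lemma3p1:
  fixes L :: logic and k :: nat
    and \<sigma> \<sigma>' :: "('r, 'c) vocab"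
    and C D :: "('a, 'r, 'c) struct set"
    and A A' B B' :: "('a, 'r, 'c) struct"
  assumes "disjoint_vocabs \<sigma> \<sigma>'"
    and "\<forall>M \<in> C. is_structure \<sigma>' M"
    and "\<forall>M \<in> D. is_structure \<sigma> M"
    and "A \<in> D" and "A' \<in> D" and "B \<in> C" and "B' \<in> C"
    and "sdom A = sdom B" and "sdom A' = sdom B'"
    and "is_k_flip L \<sigma> \<sigma>' D C k (A, B) (A', B')"
  shows "inv_tp L \<sigma> \<sigma>' D C k A = inv_tp L \<sigma> \<sigma>' D C k A'"
  using inv_tp_eq_if_k_flip[OF assms(10)] by simp

end
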